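(* Let $n$ be a positive integer and let $g_k(x)=\sum_{j=0}^{k}\binom{k}{j}^2\binom{2j}{j}x^j$ denote the Sun polynomials. Then (i) $\displaystyle \frac{1}{n}\sum_{k=0}^{n-1}(4k+3)g_k(x)\in\mathbb{Z}[x]$, i.e. every coefficient of the polynomial $\sum_{k=0}^{n-1}(4k+3)g_k(x)$ is divisible by $n$; (ii) $\displaystyle \sum_{k=0}^{n-1}(8k^2+12k+5)g_k(-1)\equiv 0\pmod{n}$.
   Context: The Sun polynomials are $g_k(x)=\sum_{j=0}^{k}\binom{k}{j}^2\binom{2j}{j}x^j$ for integers $k\ge 0$. *)

theory Defs
  imports "HOL-Computational_Algebra.Polynomial"
begin

definition sun_poly :: "nat \<Rightarrow> int poly" where
  "sun_poly k = (\<Sum>j\<le>k. monom (int ((k choose j)^2 * ((2*j) choose j))) j)"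

end

theory Submission
  imports Defs
begin

text \<open>
  Part (i): the coefficient of \<open>x^j\<close> is \<open>C(2j,j) * \<Sum>\<^sub>k\<^sub><\<^sub>n (4k+3) C(k,j)^2\<close>. Expanding \<open>C(k,j)^2\<close>
  in the basis \<open>C(k,m)\<close> and summing over \<open>k\<close> by the hockey-stick identity writes it as
  \<open>\<Sum>\<^sub>m c\<^sub>m C(n,m+1)\<close>, where each \<open>c\<^sub>m\<close> is divisible by \<open>m+1\<close> (this needs the factor \<open>C(2j,j)\<close>).
  Since \<open>(m+1) C(n,m+1) = n C(n-1,m)\<close>, the sum is divisible by \<open>n\<close>.

  Part (ii): a telescoping certificate in the style of Zeilberger gives the closed form
  \<open>\<Sum>\<^sub>j\<^sub>\<le>\<^sub>n (-1)^j Cat\<^sub>j ((n-j) C(n,j))^2 (2n+5j+3)\<close>, with \<open>Cat\<^sub>j\<close> the Catalan numbers, and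
  \<open>(n-j) C(n,j) = n C(n-1,j)\<close> makes it divisible even by \<open>n^2\<close>.
\<close>

lemma Suc_mult_choose_Suc: "Suc k * (n choose Suc k) = (n - k) * (n choose k)"
  using binomial_absorption[of k n] binomial_absorb_comp[of n k] by simp

lemma of_nat_Suc_mult_choose_Suc:
  assumes "k \<le> n"
  shows "(of_nat k + 1) * of_nat (n choose Suc k) = (of_nat n - of_nat k) * (of_nat (n choose k) :: 'a::comm_ring_1)"
proof -
  have "of_nat (Suc k * (n choose Suc k)) = (of_nat ((n - k) * (n choose k)) :: 'a)"
    by (simp only: Suc_mult_choose_Suc)
  then show ?thesis using assms by (simp add: of_nat_diff algebra_simps)
qed

definition catalan :: "nat \<Rightarrow> nat" where
  "catalan n = (2*n choose n) - (2*n choose Suc n)"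

lemma Suc_mult_catalan: "Suc n * catalan n = 2*n choose n"
proof -
  have "Suc n * (2*n choose Suc n) = n * (2*n choose n)"
    using Suc_mult_choose_Suc[of n "2*n"] by simp
  then show ?thesis unfolding catalan_def by (simp add: diff_mult_distrib2)
qed

lemma choose_odd_central: "Suc (2*n) choose Suc n = Suc (2*n) * catalan n"
proof -
  have "Suc n * (Suc (2*n) choose Suc n) = Suc (2*n) * (2*n choose n)"
    using Suc_times_binomial_eq[of "2*n" n] by (simp only: mult.commute)
  also have "\<dots> = Suc n * (Suc (2*n) * catalan n)"
    by (simp only: Suc_mult_catalan[symmetric] mult.left_commute)
  finally show ?thesis by (metis Suc_neq_Zero mult_left_cancel)
qed

lemma central_binomial_Suc: "2 * Suc n choose Suc n = 2 * Suc (2*n) * catalan n"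
proof -
  have sym: "Suc (2*n) choose n = Suc (2*n) choose Suc n"
    using binomial_symmetric[of n "Suc (2*n)"] by simp
  have "Suc n * (2 * Suc n choose Suc n) = Suc n * (2 * (Suc (2*n) choose Suc n))"
    using Suc_times_binomial[of n "Suc (2*n)"] by (simp del: binomial_Suc_Suc add: sym)
  then show ?thesis by (metis Suc_neq_Zero mult_left_cancel choose_odd_central mult.assoc)
qed

lemma poly_sun_poly: "poly (sun_poly k) x = (\<Sum>j\<le>k. int ((k choose j)^2 * (2*j choose j)) * x^j)"
  by (simp add: sun_poly_def poly_sum poly_monom)

lemma coeff_sun_poly: "coeff (sun_poly k) j = int ((k choose j)^2 * (2*j choose j))"
  by (auto simp: sun_poly_def coeff_sum coeff_monom binomial_eq_0)

definition sun_minus_one_sum_formula :: "nat \<Rightarrow> int" where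
  "sun_minus_one_sum_formula n =
     (\<Sum>j\<le>n. (-1)^j * int (catalan j) * int ((n - j) * (n choose j))^2 * (2*int n + 5*int j + 3))"

lemma sun_minus_one_sum_formula_Suc:
  "sun_minus_one_sum_formula (Suc n) =
     (\<Sum>j\<le>n. (-1)^j * int (catalan j) * int (Suc n * (n choose j))^2 * (2*int n + 5*int j + 5))"
  unfolding sun_minus_one_sum_formula_def sum.atMost_Suc binomial_absorb_comp diff_Suc_1
  by (simp add: binomial_eq_0 algebra_simps)

lemma square_dvd_sun_minus_one_sum_formula: "int n ^ 2 dvd sun_minus_one_sum_formula n"
  unfolding sun_minus_one_sum_formula_def
  by (intro dvd_sum) (simp add: binomial_absorb_comp power_mult_distrib)

definition sun_minus_one_antidifference :: "nat \<Rightarrow> nat \<Rightarrow> int" where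
  "sun_minus_one_antidifference n j = (-1)^j * int (2*j choose j) * int (j * (n choose j))^2"

lemma sun_minus_one_antidifference_step:
  assumes "j \<le> n"
  shows "(-1)^j * int (catalan j) * int (Suc n * (n choose j))^2 * (2*int n + 5*int j + 5)
       - (-1)^j * int (catalan j) * int ((n - j) * (n choose j))^2 * (2*int n + 5*int j + 3)
       - int (8*n^2 + 12*n + 5) * (int ((n choose j)^2 * (2*j choose j)) * (-1)^j)
     = sun_minus_one_antidifference n (Suc j) - sun_minus_one_antidifference n j"
proof -
  have "sun_minus_one_antidifference n (Suc j)
      = - ((-1)^j * int (2 * Suc (2*j) * catalan j) * int ((n - j) * (n choose j))^2)"
    unfolding sun_minus_one_antidifference_def central_binomial_Suc Suc_mult_choose_Suc by simp
  moreover have "int (2*j choose j) = int (Suc j * catalan j)"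
    by (simp only: Suc_mult_catalan)
  moreover have "int ((n - j) * (n choose j)) = (int n - int j) * int (n choose j)"
    using assms by (simp add: of_nat_diff)
  ultimately show ?thesis
    unfolding sun_minus_one_antidifference_def[of n j]
    by (simp only: of_nat_mult of_nat_add of_nat_Suc of_nat_power of_nat_numeral)
      (simp add: algebra_simps power2_eq_square)
qed

lemma sum_sun_poly_minus_one:
  "(\<Sum>k<n. int (8*k^2 + 12*k + 5) * poly (sun_poly k) (-1)) = sun_minus_one_sum_formula n"
proof (induction n)
  case 0
  show ?case by (simp add: sun_minus_one_sum_formula_def)
next
  case (Suc n)
  have "sun_minus_one_sum_formula (Suc n) - sun_minus_one_sum_formula n
        - int (8*n^2 + 12*n + 5) * poly (sun_poly n) (-1)
      = (\<Sum>j\<le>n. sun_minus_one_antidifference n (Suc j) - sun_minus_one_antidifference n j)"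
    unfolding sun_minus_one_sum_formula_Suc sun_minus_one_sum_formula_def[of n] poly_sun_poly
      sum_distrib_left sum_subtractf[symmetric]
    by (intro sum.cong refl sun_minus_one_antidifference_step) simp
  also have "\<dots> = sun_minus_one_antidifference n (Suc n) - sun_minus_one_antidifference n 0"
    by (simp only: lessThan_Suc_atMost[symmetric] sum_lessThan_telescope)
  also have "\<dots> = 0"
    by (simp add: sun_minus_one_antidifference_def binomial_eq_0)
  finally show ?case using Suc.IH by simp
qed

lemma choose_square_expansion:
  "(k choose j)^2 = (\<Sum>i\<le>j. (j choose i) * ((j+i) choose i) * (k choose (j+i)))"
proof (cases "j \<le> k")
  case False
  then show ?thesis by (simp add: binomial_eq_0)
next
  case jk: True
  define r where "r = k - j"
  have "(\<Sum>i\<le>j. (j choose i) * (r choose i)) = (\<Sum>i\<le>j. (j choose (j - i)) * (r choose i))"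
    by (intro sum.cong refl) (simp add: binomial_symmetric[symmetric])
  also have "\<dots> = (\<Sum>i\<le>j. (j choose i) * (r choose (j - i)))"
    by (rule sum.reindex_bij_witness[where i="\<lambda>i. j - i" and j="\<lambda>i. j - i"]) (simp_all add: diff_diff_cancel)
  also have "\<dots> = k choose j"
    using vandermonde[where m=j and n=r and r=j] jk by (simp add: r_def)
  finally have vandermonde_sym: "k choose j = (\<Sum>i\<le>j. (j choose i) * (r choose i))" ..
  have subset_of_subset: "(k choose j) * (r choose i) = ((j+i) choose i) * (k choose (j+i))" for i
  proof (cases "j + i \<le> k")
    case True
    then show ?thesis
      using choose_mult_lemma[of i "k - (j+i)" j] binomial_symmetric[of j "i+j"]
      by (simp add: r_def ac_simps)
  next
    case False
    then have "r < i" using jk by (simp add: r_def)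
    with False show ?thesis by (simp add: binomial_eq_0)
  qed
  have "(k choose j)^2 = (\<Sum>i\<le>j. (j choose i) * ((k choose j) * (r choose i)))"
    unfolding power2_eq_square by (subst (2) vandermonde_sym) (simp add: sum_distrib_left ac_simps)
  then show ?thesis by (simp add: subset_of_subset mult.assoc)
qed

lemma affine_mult_choose:
  "(a*n + b) * (n choose m) = a * Suc m * (n choose Suc m) + (a*m + b) * (n choose m)"
proof (cases "m \<le> n")
  case True
  then have "a * n + b = a * (n - m) + (a * m + b)"
    by (simp add: diff_mult_distrib2)
  then show ?thesis
    by (simp only: mult.assoc Suc_mult_choose_Suc) (simp add: algebra_simps)
next
  case False
  then show ?thesis by (simp add: binomial_eq_0)
qed

lemma sum_lessThan_choose: "(\<Sum>k<n. k choose m) = n choose Suc m"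
  by (induction n) simp_all

definition sun_weight :: "nat \<Rightarrow> nat \<Rightarrow> nat" where
  "sun_weight j i = (2*j choose j) * (j choose i) * ((j+i) choose i)"

definition sun_quotient :: "nat \<Rightarrow> nat \<Rightarrow> nat" where
  "sun_quotient j i = catalan j * ((j+i) choose i) * ((j+1) choose i)
                      + ((2*j+2) choose (j+1+i)) * ((j+i) choose i)^2"

lemma sun_quotient_0: "(4*j+3) * sun_weight j 0 = (j+1) * sun_quotient j 0"
proof -
  have "(j+1) * sun_quotient j 0 = (j+1) * catalan j * (4*j+3)"
    using central_binomial_Suc[of j] by (simp add: sun_quotient_def algebra_simps)
  also have "\<dots> = (4*j+3) * sun_weight j 0"
    using Suc_mult_catalan[of j] by (simp add: sun_weight_def algebra_simps)
  finally show ?thesis ..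
qed

lemma choose_double_Suc_mult_choose:
  assumes "i \<le> j"
  shows "(j+i+2) * ((2*j+2) choose (j+1+Suc i)) * ((j + Suc i) choose Suc i)
           = 2 * (2*j+1) * catalan j * (j+1) * ((j+1) choose Suc i)"
proof -
  have "(j+i+2) * ((j + Suc i) choose Suc i) = (j+1) * ((j+i+2) choose Suc j)"
    using Suc_times_binomial[of j "j+i+1"] binomial_symmetric[of j "j+i+1"] by (simp del: binomial_Suc_Suc)
  moreover have "((2*j+2) choose (j+1+Suc i)) * ((j+i+2) choose Suc j) = ((2*j+2) choose Suc j) * ((j+1) choose Suc i)"
  proof -
    have sizes: "Suc i + (j - i) = j+1" "j + 1 + Suc j = 2*j+2" "Suc i + Suc j = j+1+Suc i" "j+1+Suc i = j+i+2"
      using assms by auto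
    show ?thesis using choose_mult_lemma[of "Suc i" "j - i" "Suc j"] by (simp only: sizes)
  qed
  ultimately have "(j+i+2) * ((2*j+2) choose (j+1+Suc i)) * ((j + Suc i) choose Suc i)
      = (j+1) * (((2*j+2) choose Suc j) * ((j+1) choose Suc i))"
    by (metis mult.assoc mult.left_commute)
  moreover have "(2*j+2) choose Suc j = 2 * (2*j+1) * catalan j"
    using central_binomial_Suc[of j] by (simp del: binomial_Suc_Suc)
  ultimately show ?thesis
    by (simp only: ac_simps)
qed

text \<open>In the application \<open>x, y, x', y', v, u, t\<close> are \<open>C(j,i)\<close>, \<open>C(j+i,i)\<close>, \<open>C(j,i+1)\<close>,
  \<open>C(j+i+1,i+1)\<close>, \<open>C(j+1,i+1)\<close>, \<open>C(2j+2,j+i+2)\<close> and \<open>Cat\<^sub>j\<close>; the hypotheses relate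
  neighbouring binomial coefficients.\<close>

lemma sun_quotient_Suc_ring_identity:
  fixes i j x y t x' y' v u :: int
  assumes "i + 1 \<noteq> 0"
    and "(i+1) * x' = (j-i) * x" and "(i+1) * y' = (j+i+1) * y" and "(i+1) * v = (j+1) * x"
    and "(j+i+2) * u * y' = 2*(2*j+1) * t * (j+1) * v"
  shows "(4*(j+i+1)+3) * ((j+1)*t*x'*y') + 4*(j+i+1) * ((j+1)*t*x*y) = (j+i+2) * (t*y'*v + u*y'^2)"
  using assms by algebra

lemma sun_quotient_Suc:
  "(4*(j+i+1)+3) * sun_weight j (Suc i) + 4*(j+i+1) * sun_weight j i
     = (j+i+2) * sun_quotient j (Suc i)"
proof (cases "i \<le> j")
  case True
  have up: "Suc i * ((j + Suc i) choose Suc i) = Suc (j+i) * ((j+i) choose i)"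
    using Suc_times_binomial[of i "j+i"] by (simp only: add_Suc_right)
  have left: "Suc i * ((j+1) choose Suc i) = Suc j * (j choose i)"
    using Suc_times_binomial[of i j] by simp
  have outer: "(j+i+2) * ((2*j+2) choose (j+1+Suc i)) * ((j + Suc i) choose Suc i)
      = 2 * (2*j+1) * catalan j * (j+1) * ((j+1) choose Suc i)"
    using True by (rule choose_double_Suc_mult_choose)
  have central: "int (2*j choose j) = (int j + 1) * int (catalan j)"
    using Suc_mult_catalan[of j] by (metis of_nat_Suc of_nat_mult add.commute)
  have "(4*(int j+int i+1)+3) * ((int j+1) * int (catalan j) * int (j choose Suc i) * int ((j + Suc i) choose Suc i))
        + 4*(int j+int i+1) * ((int j+1) * int (catalan j) * int (j choose i) * int ((j+i) choose i))
      = (int j+int i+2) * (int (catalan j) * int ((j + Suc i) choose Suc i) * int ((j+1) choose Suc i)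
        + int ((2*j+2) choose (j+1+Suc i)) * int ((j + Suc i) choose Suc i)^2)"
  proof (rule sun_quotient_Suc_ring_identity)
    show "(int i + 1) * int (j choose Suc i) = (int j - int i) * int (j choose i)"
      using of_nat_Suc_mult_choose_Suc[OF True] .
    show "(int i + 1) * int ((j + Suc i) choose Suc i) = (int j + int i + 1) * int ((j+i) choose i)"
      using arg_cong[OF up, of int] by (simp add: algebra_simps)
    show "(int i + 1) * int ((j+1) choose Suc i) = (int j + 1) * int (j choose i)"
      using arg_cong[OF left, of int] by (simp add: algebra_simps)
    show "(int j + int i + 2) * int ((2*j+2) choose (j+1+Suc i)) * int ((j + Suc i) choose Suc i)
        = 2 * (2 * int j + 1) * int (catalan j) * (int j + 1) * int ((j+1) choose Suc i)"
      using arg_cong[OF outer, of int] by (simp add: algebra_simps)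
  qed simp
  then have "int ((4*(j+i+1)+3) * sun_weight j (Suc i) + 4*(j+i+1) * sun_weight j i)
      = int ((j+i+2) * sun_quotient j (Suc i))"
    unfolding sun_weight_def sun_quotient_def of_nat_add of_nat_mult of_nat_power central
    by (simp add: algebra_simps)
  then show ?thesis by (simp only: of_nat_eq_iff)
next
  case False
  then show ?thesis by (simp add: sun_weight_def sun_quotient_def binomial_eq_0)
qed

lemma sun_coeff_expansion:
  "(4*k+3) * ((k choose j)^2 * (2*j choose j))
     = (\<Sum>i\<le>Suc j. (j+i+1) * sun_quotient j i * (k choose (j+i)))"
proof -
  define A where "A i = (4*(j+i)+3) * sun_weight j i * (k choose (j+i))" for i
  define B where "B i = 4*(j+i+1) * sun_weight j i * (k choose Suc (j+i))" for i
  have shifted: "(j + Suc i + 1) * sun_quotient j (Suc i) * (k choose (j + Suc i)) = A (Suc i) + B i" for i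
  proof -
    have "(j + Suc i + 1) * sun_quotient j (Suc i) * (k choose (j + Suc i))
        = ((4*(j+i+1)+3) * sun_weight j (Suc i) + 4*(j+i+1) * sun_weight j i) * (k choose (j + Suc i))"
      by (simp only: sun_quotient_Suc) simp
    then show ?thesis by (simp add: A_def B_def algebra_simps)
  qed
  have "(\<Sum>i\<le>Suc j. (j+i+1) * sun_quotient j i * (k choose (j+i)))
      = (j+0+1) * sun_quotient j 0 * (k choose (j+0))
        + (\<Sum>i\<le>j. (j + Suc i + 1) * sun_quotient j (Suc i) * (k choose (j + Suc i)))"
    by (rule sum.atMost_Suc_shift)
  also have "\<dots> = A 0 + (\<Sum>i\<le>j. A (Suc i) + B i)"
    by (simp only: shifted add_0_right sun_quotient_0[symmetric] A_def)
  also have "\<dots> = (\<Sum>i\<le>Suc j. A i) + (\<Sum>i\<le>j. B i)"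
    by (simp only: sum.distrib sum.atMost_Suc_shift add.assoc)
  also have "(\<Sum>i\<le>Suc j. A i) = (\<Sum>i\<le>j. A i)"
    by (simp add: A_def sun_weight_def binomial_eq_0)
  also have "(\<Sum>i\<le>j. A i) + (\<Sum>i\<le>j. B i) = (\<Sum>i\<le>j. sun_weight j i * ((4*k+3) * (k choose (j+i))))"
    unfolding sum.distrib[symmetric] affine_mult_choose[of 4 k 3]
    by (intro sum.cong refl) (simp add: A_def B_def algebra_simps)
  also have "\<dots> = (4*k+3) * ((k choose j)^2 * (2*j choose j))"
    unfolding choose_square_expansion[of k j] sum_distrib_left sum_distrib_right
    by (intro sum.cong refl) (simp add: sun_weight_def)
  finally show ?thesis ..
qed

lemma sum_lessThan_sun_coeff:
  "(\<Sum>k<n. (4*k+3) * ((k choose j)^2 * (2*j choose j)))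
     = (\<Sum>i\<le>Suc j. (j+i+1) * sun_quotient j i * (n choose Suc (j+i)))"
proof -
  have "(\<Sum>k<n. (4*k+3) * ((k choose j)^2 * (2*j choose j)))
      = (\<Sum>i\<le>Suc j. (j+i+1) * sun_quotient j i * (\<Sum>k<n. k choose (j+i)))"
    by (simp only: sun_coeff_expansion sum_distrib_left sum.swap[of _ "{..<n}"])
  then show ?thesis by (simp only: sum_lessThan_choose)
qed

lemma dvd_sum_lessThan_sun_coeff: "n dvd (\<Sum>k<n. (4*k+3) * ((k choose j)^2 * (2*j choose j)))"
  unfolding sum_lessThan_sun_coeff
proof (rule dvd_sum)
  fix i
  have "(j+i+1) * sun_quotient j i * (n choose Suc (j+i))
      = sun_quotient j i * (Suc (j+i) * (n choose Suc (j+i)))"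
    by (simp add: algebra_simps)
  also have "\<dots> = n * (sun_quotient j i * ((n - 1) choose (j+i)))"
    by (simp only: binomial_absorption mult.left_commute)
  finally show "n dvd (j+i+1) * sun_quotient j i * (n choose Suc (j+i))"
    by simp
qed

theorem theorem1:
  fixes n :: nat
  assumes "n > 0"
  shows "(\<forall>i. int n dvd coeff (\<Sum>k<n. smult (int (4*k+3)) (sun_poly k)) i)
       \<and> int n dvd (\<Sum>k<n. int (8*k^2 + 12*k + 5) * poly (sun_poly k) (-1))"
proof (intro conjI allI)
  fix i
  have "coeff (\<Sum>k<n. smult (int (4*k+3)) (sun_poly k)) i
      = int (\<Sum>k<n. (4*k+3) * ((k choose i)^2 * (2*i choose i)))"
    unfolding coeff_sum coeff_smult coeff_sun_poly of_nat_sum of_nat_mult ..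
  then show "int n dvd coeff (\<Sum>k<n. smult (int (4*k+3)) (sun_poly k)) i"
    using dvd_sum_lessThan_sun_coeff[of n i] by (simp only: int_dvd_int_iff)
next
  have "int n dvd int n ^ 2"
    by (simp add: power2_eq_square)
  then show "int n dvd (\<Sum>k<n. int (8*k^2 + 12*k + 5) * poly (sun_poly k) (-1))"
    unfolding sum_sun_poly_minus_one using square_dvd_sun_minus_one_sum_formula by (rule dvd_trans)
qed

end
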